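(* The constants $\lambda_1,\lambda_2>0$ can be chosen so that for all $n\geq1$, \[\mathbb P_\mu\big(\exists G\in CG(n,\geq\log n)\text{ with }|w|(G)>\lambda_1|E(G)|\text{ or }|w|(G)<\lambda_2|E(G)|\big)<n^{-4}.\]
   Context: $\mu$ is the product measure on $\mathbb R^{E(\mathbb Z^2)}$ under which the interactions $(w_e)$ are i.i.d. standard normal. $[n]=\{0,\dots,n-1\}$, $[n]^2$ is the subgraph of the lattice $\mathbb Z^2$ induced on $\{(i,j):i,j\in[n]\}$, and $CG(n,\geq m)$ is the set of connected subgraphs of $[n]^2$ with at least $m$ vertices. For a subgraph $G$, $|w|(G)=\sum_{e\in E(G)}|w_e|$. $\log$ is the natural logarithm. *)

theory Defs
  imports "HOL-Probability.Probability"
begin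

type_synonym vertex = "int \<times> int"
type_synonym edge = "vertex set"
type_synonym graph = "vertex set \<times> edge set"

definition lattice_edges :: "edge set" where
  "lattice_edges = {{u, v} | u v. \<bar>fst u - fst v\<bar> + \<bar>snd u - snd v\<bar> = 1}"

definition std_normal :: "real measure" where
  "std_normal = density lborel std_normal_density"

definition mu :: "(edge \<Rightarrow> real) measure" where
  "mu = (\<Pi>\<^sub>M e\<in>lattice_edges. std_normal)"

definition box :: "nat \<Rightarrow> vertex set" where
  "box n = {(i, j). 0 \<le> i \<and> i < int n \<and> 0 \<le> j \<and> j < int n}"

definition box_edges :: "nat \<Rightarrow> edge set" where
  "box_edges n = {e \<in> lattice_edges. e \<subseteq> box n}"

definition subgraph_of_box :: "nat \<Rightarrow> graph \<Rightarrow> bool" where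
  "subgraph_of_box n G \<longleftrightarrow> fst G \<subseteq> box n \<and> snd G \<subseteq> box_edges n \<and> (\<forall>e\<in>snd G. e \<subseteq> fst G)"

definition graph_connected :: "graph \<Rightarrow> bool" where
  "graph_connected G \<longleftrightarrow> fst G \<noteq> {} \<and>
     (\<forall>u\<in>fst G. \<forall>v\<in>fst G. (u, v) \<in> {(x, y). {x, y} \<in> snd G}\<^sup>*)"

definition CG :: "nat \<Rightarrow> real \<Rightarrow> graph set" where
  "CG n m = {G. subgraph_of_box n G \<and> graph_connected G \<and> real (card (fst G)) \<ge> m}"

definition absw :: "(edge \<Rightarrow> real) \<Rightarrow> graph \<Rightarrow> real" where
  "absw w G = (\<Sum>e\<in>snd G. \<bar>w e\<bar>)"

end

theory Submission
  imports Defs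
begin

text \<open>Chernoff bounds, from the exponential moments of \<open>|w\<^sub>e|\<close> and of \<open>-t |w\<^sub>e|\<close>, give for every
  \<open>\<epsilon> > 0\<close> constants \<open>\<lambda>1, \<lambda>2\<close> such that \<open>|w|(F)\<close> falls outside \<open>[\<lambda>2 |F|, \<lambda>1 |F|]\<close> with
  probability at most \<open>2 \<epsilon>^|F|\<close>, for every finite edge set \<open>F\<close>. A Peierls argument controls the
  connected subgraphs: writing \<open>\<partial>G\<close> for the box edges touching \<open>G\<close>, the sum of \<open>2^-|\<partial>G|\<close> over
  the connected \<open>G\<close> containing a fixed vertex is at most 1, since the edge configurations in which
  \<open>G\<close> is exactly the open cluster of that vertex are pairwise disjoint and there are
  \<open>2^(|E([n]^2)| - |\<partial>G|)\<close> of them. As \<open>|\<partial>G| \<le> 4 |V(G)| \<le> 8 |E(G)|\<close> and \<open>|V(G)| \<ge> log n\<close>,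
  a small \<open>\<epsilon>\<close> gives \<open>2 \<epsilon>^|E(G)| \<le> 2^-|\<partial>G| n^-7 / 2\<close>, and the union bound over the \<open>n^2\<close> roots
  yields \<open>n^-5 / 2\<close>.\<close>

lemma prob_space_std_normal: "prob_space std_normal"
  unfolding std_normal_def by (rule prob_space_normal_density) simp

interpretation std_normal_product: product_prob_space "\<lambda>_::edge. std_normal" lattice_edges
  by (simp add: product_prob_space_def product_sigma_finite_def product_prob_space_axioms_def
      prob_space_std_normal prob_space_imp_sigma_finite)

lemma prob_space_mu: "prob_space mu"
  unfolding mu_def by (rule std_normal_product.P.prob_space_axioms)

lemma sets_std_normal [simp]: "sets std_normal = sets borel"
  by (simp add: std_normal_def)

lemma borel_measurable_std_normalI: "f \<in> borel_measurable borel \<Longrightarrow> f \<in> borel_measurable std_normal"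
  by (subst measurable_cong_sets[OF sets_std_normal refl])

lemma borel_measurable_mu_component: "e \<in> lattice_edges \<Longrightarrow> (\<lambda>w. w e) \<in> borel_measurable mu"
  unfolding mu_def
  by (subst measurable_cong_sets[OF refl sets_std_normal[symmetric]]) (rule measurable_component_singleton)

lemma borel_measurable_mu_sum_abs:
  "finite F \<Longrightarrow> F \<subseteq> lattice_edges \<Longrightarrow> (\<lambda>w. \<Sum>e\<in>F. \<bar>w e\<bar>) \<in> borel_measurable mu"
  by (intro borel_measurable_sum borel_measurable_abs borel_measurable_mu_component) auto

lemma sets_mu_sum_abs_greater:
  "finite F \<Longrightarrow> F \<subseteq> lattice_edges \<Longrightarrow> {w \<in> space mu. c < (\<Sum>e\<in>F. \<bar>w e\<bar>)} \<in> sets mu"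
  by (intro borel_measurable_less borel_measurable_mu_sum_abs measurable_const) auto

lemma sets_mu_sum_abs_less:
  "finite F \<Longrightarrow> F \<subseteq> lattice_edges \<Longrightarrow> {w \<in> space mu. (\<Sum>e\<in>F. \<bar>w e\<bar>) < c} \<in> sets mu"
  by (intro borel_measurable_less borel_measurable_mu_sum_abs measurable_const) auto

lemma nn_integral_mu_prod:
  assumes F: "finite F" "F \<subseteq> lattice_edges" and f: "f \<in> borel_measurable borel"
  shows "(\<integral>\<^sup>+ w. (\<Prod>e\<in>F. f (w e)) \<partial>mu) = (\<integral>\<^sup>+ x. f x \<partial>std_normal) ^ card F"
proof -
  let ?P = "PiM F (\<lambda>_. std_normal)"
  have f_std: "f \<in> borel_measurable std_normal"
    using f by (rule borel_measurable_std_normalI)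
  have prod_measurable: "(\<lambda>w. \<Prod>e\<in>F. f (w e)) \<in> borel_measurable ?P"
    by (intro borel_measurable_prod_ennreal
        measurable_compose[OF measurable_component_singleton[where M="\<lambda>_. std_normal"] f_std]) auto
  have "(\<integral>\<^sup>+ w. (\<Prod>e\<in>F. f (w e)) \<partial>mu) = (\<integral>\<^sup>+ w. (\<Prod>e\<in>F. f (restrict w F e)) \<partial>mu)"
    by (intro nn_integral_cong prod.cong) auto
  also have "\<dots> = (\<integral>\<^sup>+ w. (\<Prod>e\<in>F. f (w e)) \<partial>distr mu ?P (\<lambda>x. restrict x F))"
    unfolding mu_def
    by (subst nn_integral_distr[OF measurable_restrict_subset[OF F(2), where M="\<lambda>_. std_normal"]])
      (simp_all add: measurable_distr_eq1 prod_measurable)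
  also have "\<dots> = (\<integral>\<^sup>+ w. (\<Prod>e\<in>F. f (w e)) \<partial>?P)"
    unfolding mu_def using F by (simp add: std_normal_product.distr_PiM_restrict_finite)
  also have "\<dots> = (\<Prod>e\<in>F. \<integral>\<^sup>+ x. f x \<partial>std_normal)"
    by (rule std_normal_product.product_nn_integral_prod) (auto simp: F f_std)
  finally show ?thesis by (simp only: prod_constant)
qed

lemma nn_integral_normal_density_eq_1:
  "0 < \<sigma> \<Longrightarrow> (\<integral>\<^sup>+ x. ennreal (normal_density \<mu> \<sigma> x) \<partial>lborel) = 1"
  using prob_space.emeasure_space_1[OF prob_space_normal_density, of \<sigma> \<mu>]
  by (simp add: emeasure_density)

lemma nn_integral_std_normal_exp_square:
  assumes a: "a < 1/2"
  shows "(\<integral>\<^sup>+ x. ennreal (exp (a * x\<^sup>2)) \<partial>std_normal) = ennreal (1 / sqrt (1 - 2*a))"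
proof -
  define \<sigma> where "\<sigma> = 1 / sqrt (1 - 2*a)"
  have a_pos: "0 < 1 - 2*a" using a by simp
  then have \<sigma>: "0 < \<sigma>" by (simp add: \<sigma>_def)
  have density_eq: "std_normal_density x * exp (a * x\<^sup>2) = \<sigma> * normal_density 0 \<sigma> x" for x
  proof -
    have inv_var: "1 / \<sigma>\<^sup>2 = 1 - 2*a" using a_pos by (simp add: \<sigma>_def power_divide)
    have "- x\<^sup>2 / 2 + a * x\<^sup>2 = - x\<^sup>2 * (1 / \<sigma>\<^sup>2) / 2"
      by (simp add: inv_var field_simps)
    also have "\<dots> = -(x - 0)\<^sup>2 / (2 * \<sigma>\<^sup>2)" using \<sigma> by (simp add: field_simps)
    finally have exponent: "- x\<^sup>2 / 2 + a * x\<^sup>2 = -(x - 0)\<^sup>2 / (2 * \<sigma>\<^sup>2)" .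
    have "std_normal_density x * exp (a * x\<^sup>2) = 1 / sqrt (2*pi) * exp (-(x - 0)\<^sup>2 / (2 * \<sigma>\<^sup>2))"
      by (simp only: std_normal_density_def mult.assoc exp_add[symmetric] exponent)
    moreover have "sqrt (2 * pi * \<sigma>\<^sup>2) = sqrt (2*pi) * \<sigma>"
      using \<sigma> by (simp add: real_sqrt_mult)
    ultimately show ?thesis
      using \<sigma> unfolding normal_density_def by simp
  qed
  have "(\<integral>\<^sup>+ x. ennreal (exp (a * x\<^sup>2)) \<partial>std_normal)
      = (\<integral>\<^sup>+ x. ennreal (std_normal_density x) * ennreal (exp (a * x\<^sup>2)) \<partial>lborel)"
    unfolding std_normal_def by (subst nn_integral_density) auto
  also have "\<dots> = (\<integral>\<^sup>+ x. ennreal \<sigma> * ennreal (normal_density 0 \<sigma> x) \<partial>lborel)"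
    by (intro nn_integral_cong)
      (simp add: density_eq ennreal_mult[symmetric] normal_density_nonneg \<sigma> less_imp_le)
  also have "\<dots> = ennreal \<sigma>"
    by (subst nn_integral_cmult) (auto simp: nn_integral_normal_density_eq_1[OF \<sigma>])
  finally show ?thesis by (simp add: \<sigma>_def)
qed

lemma nn_integral_std_normal_exp_abs_le:
  "(\<integral>\<^sup>+ x. ennreal (exp \<bar>x\<bar>) \<partial>std_normal) \<le> ennreal (exp 1 * sqrt 2)"
proof -
  have "(\<integral>\<^sup>+ x. ennreal (exp \<bar>x\<bar>) \<partial>std_normal)
      \<le> (\<integral>\<^sup>+ x. ennreal (exp 1) * ennreal (exp ((1/4) * x\<^sup>2)) \<partial>std_normal)"
  proof (intro nn_integral_mono)
    fix x :: real
    have "0 \<le> (\<bar>x\<bar>/2 - 1)\<^sup>2" by simp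
    then have "\<bar>x\<bar> \<le> 1 + (1/4) * x\<^sup>2" by (simp add: power2_eq_square algebra_simps)
    then show "ennreal (exp \<bar>x\<bar>) \<le> ennreal (exp 1) * ennreal (exp ((1/4) * x\<^sup>2))"
      by (simp add: ennreal_mult[symmetric] exp_add[symmetric])
  qed
  also have "\<dots> = ennreal (exp 1) * ennreal (1 / sqrt (1 - 2*(1/4)))"
    using nn_integral_std_normal_exp_square[of "1/4"]
    by (subst nn_integral_cmult) (auto intro!: borel_measurable_std_normalI)
  also have "\<dots> = ennreal (exp 1 * sqrt 2)"
    by (simp add: ennreal_mult[symmetric] real_sqrt_divide)
  finally show ?thesis .
qed

lemma nn_integral_std_normal_exp_neg_abs_le:
  assumes t: "0 < t"
  shows "(\<integral>\<^sup>+ x. ennreal (exp (- t * \<bar>x\<bar>)) \<partial>std_normal) \<le> ennreal (2 / sqrt (1 + 2*t))"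
proof -
  have "(\<integral>\<^sup>+ x. ennreal (exp (- t * \<bar>x\<bar>)) \<partial>std_normal)
      \<le> (\<integral>\<^sup>+ x. ennreal (exp ((-t) * x\<^sup>2)) + ennreal (exp (-t)) \<partial>std_normal)"
  proof (intro nn_integral_mono)
    fix x :: real
    have "exp (- t * \<bar>x\<bar>) \<le> exp ((-t) * x\<^sup>2) + exp (-t)"
    proof (cases "\<bar>x\<bar> \<le> 1")
      case True
      then have "x\<^sup>2 \<le> \<bar>x\<bar>" by (metis abs_ge_zero mult_left_le power2_abs power2_eq_square)
      then have "exp (- t * \<bar>x\<bar>) \<le> exp ((-t) * x\<^sup>2)" using t by simp
      then show ?thesis by (smt (verit) exp_gt_zero)
    next
      case False
      then have "exp (- t * \<bar>x\<bar>) \<le> exp (-t)" using t by simp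
      then show ?thesis by (smt (verit) exp_gt_zero)
    qed
    then show "ennreal (exp (- t * \<bar>x\<bar>)) \<le> ennreal (exp ((-t) * x\<^sup>2)) + ennreal (exp (-t))"
      by (simp add: ennreal_plus[symmetric] del: ennreal_plus)
  qed
  also have "\<dots> = ennreal (1 / sqrt (1 + 2*t) + exp (-t))"
    using nn_integral_std_normal_exp_square[of "-t"] t
      prob_space.emeasure_space_1[OF prob_space_std_normal]
    by (subst nn_integral_add)
      (auto intro!: borel_measurable_std_normalI simp del: ennreal_plus simp: ennreal_plus[symmetric])
  also have "\<dots> \<le> ennreal (2 / sqrt (1 + 2*t))"
  proof -
    have "sqrt (1 + 2*t) \<le> sqrt ((1 + t)\<^sup>2)"
      by (intro real_sqrt_le_mono) (simp add: power2_eq_square algebra_simps)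
    also have "\<dots> \<le> exp t" using t by (simp add: exp_ge_add_one_self)
    finally have "exp (-t) \<le> 1 / sqrt (1 + 2*t)"
      using t by (simp add: exp_minus field_simps)
    then show ?thesis by (intro ennreal_leI) simp
  qed
  finally show ?thesis .
qed

lemma measure_mu_le_prod_moment:
  assumes F: "finite F" "F \<subseteq> lattice_edges" and f: "f \<in> borel_measurable borel"
    and f_nonneg: "\<And>x. 0 \<le> f x" and c: "0 < c" and M: "0 \<le> M"
    and moment: "(\<integral>\<^sup>+ x. ennreal (f x) \<partial>std_normal) \<le> ennreal M"
    and A: "A \<in> sets mu" "\<And>w. w \<in> A \<Longrightarrow> c \<le> (\<Prod>e\<in>F. f (w e))"
  shows "c * measure mu A \<le> M ^ card F"
proof -
  interpret prob_space mu by (rule prob_space_mu)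
  have "ennreal c * emeasure mu A = (\<integral>\<^sup>+ w. ennreal c * indicator A w \<partial>mu)"
    using A by (simp add: nn_integral_cmult_indicator)
  also have "\<dots> \<le> (\<integral>\<^sup>+ w. (\<Prod>e\<in>F. ennreal (f (w e))) \<partial>mu)"
  proof (intro nn_integral_mono)
    fix w
    show "ennreal c * indicator A w \<le> (\<Prod>e\<in>F. ennreal (f (w e)))"
      using A(2)[of w] by (auto simp: indicator_def prod_ennreal f_nonneg prod_nonneg)
  qed
  also have "\<dots> = (\<integral>\<^sup>+ x. ennreal (f x) \<partial>std_normal) ^ card F"
    using f by (intro nn_integral_mu_prod F) simp
  also have "\<dots> \<le> ennreal M ^ card F" using moment by (intro power_mono) auto
  finally have "ennreal (c * measure mu A) \<le> ennreal (M ^ card F)"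
    using c M by (simp add: emeasure_eq_measure ennreal_mult ennreal_power[symmetric])
  then show ?thesis using M by simp
qed

lemma sum_abs_upper_tail:
  assumes eps: "0 < eps" "eps < 1"
  obtains lam :: real where "0 < lam"
    and "\<And>F. finite F \<Longrightarrow> F \<subseteq> lattice_edges \<Longrightarrow>
      measure mu {w \<in> space mu. lam * card F < (\<Sum>e\<in>F. \<bar>w e\<bar>)} \<le> eps ^ card F"
proof -
  define M :: real where "M = exp 1 * sqrt 2"
  have "1 < M" unfolding M_def by (intro less_1_mult) auto
  then have M_eps: "1 < M / eps" using eps by (simp add: less_divide_eq)
  define lam where "lam = ln (M / eps)"
  have "0 < lam" unfolding lam_def using M_eps by simp
  moreover have "measure mu {w \<in> space mu. lam * card F < (\<Sum>e\<in>F. \<bar>w e\<bar>)} \<le> eps ^ card F"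
    if F: "finite F" "F \<subseteq> lattice_edges" for F
  proof -
    let ?A = "{w \<in> space mu. lam * card F < (\<Sum>e\<in>F. \<bar>w e\<bar>)}"
    have "exp lam ^ card F * measure mu ?A \<le> M ^ card F"
    proof (rule measure_mu_le_prod_moment[OF F])
      show "(\<lambda>x::real. exp \<bar>x\<bar>) \<in> borel_measurable borel"
        by (intro borel_measurable_continuous_onI continuous_intros continuous_on_rabs)
      show "(\<integral>\<^sup>+ x. ennreal (exp \<bar>x\<bar>) \<partial>std_normal) \<le> ennreal M"
        unfolding M_def by (rule nn_integral_std_normal_exp_abs_le)
      show "?A \<in> sets mu"
        using F by (rule sets_mu_sum_abs_greater)
      fix w assume "w \<in> ?A"
      then have "exp (card F * lam) \<le> exp (\<Sum>e\<in>F. \<bar>w e\<bar>)" by (simp add: mult.commute)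
      then show "exp lam ^ card F \<le> (\<Prod>e\<in>F. exp \<bar>w e\<bar>)" by (simp add: exp_of_nat_mult exp_sum F)
    qed (use \<open>1 < M\<close> in auto)
    then have "(M / eps) ^ card F * measure mu ?A \<le> M ^ card F"
      using M_eps by (simp add: lam_def)
    then show ?thesis using eps \<open>1 < M\<close> by (simp add: power_divide field_simps)
  qed
  ultimately show thesis by (rule that)
qed

lemma sum_abs_lower_tail:
  assumes eps: "0 < eps" "eps < 1"
  obtains lam :: real where "0 < lam"
    and "\<And>F. finite F \<Longrightarrow> F \<subseteq> lattice_edges \<Longrightarrow>
      measure mu {w \<in> space mu. (\<Sum>e\<in>F. \<bar>w e\<bar>) < lam * card F} \<le> eps ^ card F"
proof -
  define t where "t = (2 * exp 1 / eps)\<^sup>2"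
  have t: "0 < t" unfolding t_def using eps by simp
  define M where "M = 2 / sqrt (1 + 2*t)"
  have M: "0 \<le> M" unfolding M_def using t by simp
  have "2 * exp 1 / eps = sqrt t" unfolding t_def using eps by simp
  also have "\<dots> \<le> sqrt (1 + 2*t)" using t by simp
  finally have "exp 1 * M \<le> eps" unfolding M_def using t eps by (simp add: field_simps)
  have "0 < 1 / t" using t by simp
  moreover have "measure mu {w \<in> space mu. (\<Sum>e\<in>F. \<bar>w e\<bar>) < 1 / t * card F} \<le> eps ^ card F"
    if F: "finite F" "F \<subseteq> lattice_edges" for F
  proof -
    let ?A = "{w \<in> space mu. (\<Sum>e\<in>F. \<bar>w e\<bar>) < 1 / t * card F}"
    have "exp (-1) ^ card F * measure mu ?A \<le> M ^ card F"
    proof (rule measure_mu_le_prod_moment[OF F _ _ _ M])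
      show "(\<lambda>x::real. exp (- t * \<bar>x\<bar>)) \<in> borel_measurable borel"
        by (intro borel_measurable_continuous_onI continuous_intros continuous_on_rabs)
      show "(\<integral>\<^sup>+ x. ennreal (exp (- t * \<bar>x\<bar>)) \<partial>std_normal) \<le> ennreal M"
        unfolding M_def using t by (rule nn_integral_std_normal_exp_neg_abs_le)
      show "?A \<in> sets mu"
        using F by (rule sets_mu_sum_abs_less)
      fix w assume "w \<in> ?A"
      then have "t * (\<Sum>e\<in>F. \<bar>w e\<bar>) \<le> card F" using t by (simp add: field_simps)
      then have "exp (card F * (-1)) \<le> exp (- t * (\<Sum>e\<in>F. \<bar>w e\<bar>))" by simp
      then show "exp (-1) ^ card F \<le> (\<Prod>e\<in>F. exp (- t * \<bar>w e\<bar>))"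
        by (simp add: exp_of_nat_mult[symmetric] exp_sum[symmetric] F sum_distrib_left)
    qed auto
    then have "measure mu ?A \<le> (exp 1 * M) ^ card F"
      by (simp add: exp_minus power_divide field_simps power_mult_distrib)
    also have "\<dots> \<le> eps ^ card F" using \<open>exp 1 * M \<le> eps\<close> M by (intro power_mono) auto
    finally show ?thesis .
  qed
  ultimately show thesis by (rule that)
qed

definition deviation_event :: "real \<Rightarrow> real \<Rightarrow> edge set \<Rightarrow> (edge \<Rightarrow> real) set" where
  "deviation_event lam1 lam2 F =
     {w \<in> space mu. lam1 * card F < (\<Sum>e\<in>F. \<bar>w e\<bar>) \<or> (\<Sum>e\<in>F. \<bar>w e\<bar>) < lam2 * card F}"

lemma deviation_event_eq_Un:
  "deviation_event lam1 lam2 F = {w \<in> space mu. lam1 * card F < (\<Sum>e\<in>F. \<bar>w e\<bar>)}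
     \<union> {w \<in> space mu. (\<Sum>e\<in>F. \<bar>w e\<bar>) < lam2 * card F}"
  unfolding deviation_event_def by blast

lemma sets_deviation_event:
  "finite F \<Longrightarrow> F \<subseteq> lattice_edges \<Longrightarrow> deviation_event lam1 lam2 F \<in> sets mu"
  unfolding deviation_event_eq_Un by (intro sets.Un sets_mu_sum_abs_greater sets_mu_sum_abs_less)

lemma measure_deviation_event_le:
  assumes "0 < eps" "eps < 1"
  obtains lam1 lam2 :: real where "0 < lam1" "0 < lam2"
    and "\<And>F. finite F \<Longrightarrow> F \<subseteq> lattice_edges \<Longrightarrow>
      measure mu (deviation_event lam1 lam2 F) \<le> 2 * eps ^ card F"
proof -
  obtain lam1 :: real where lam1: "0 < lam1" and upper: "\<And>F. finite F \<Longrightarrow> F \<subseteq> lattice_edges \<Longrightarrow>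
      measure mu {w \<in> space mu. lam1 * card F < (\<Sum>e\<in>F. \<bar>w e\<bar>)} \<le> eps ^ card F"
    using sum_abs_upper_tail[OF assms] by blast
  obtain lam2 :: real where lam2: "0 < lam2" and lower: "\<And>F. finite F \<Longrightarrow> F \<subseteq> lattice_edges \<Longrightarrow>
      measure mu {w \<in> space mu. (\<Sum>e\<in>F. \<bar>w e\<bar>) < lam2 * card F} \<le> eps ^ card F"
    using sum_abs_lower_tail[OF assms] by blast
  have "measure mu (deviation_event lam1 lam2 F) \<le> 2 * eps ^ card F"
    if F: "finite F" "F \<subseteq> lattice_edges" for F
  proof -
    have "measure mu (deviation_event lam1 lam2 F)
        \<le> measure mu {w \<in> space mu. lam1 * card F < (\<Sum>e\<in>F. \<bar>w e\<bar>)}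
          + measure mu {w \<in> space mu. (\<Sum>e\<in>F. \<bar>w e\<bar>) < lam2 * card F}"
      unfolding deviation_event_eq_Un using F
      by (intro measure_Un_le sets_mu_sum_abs_greater sets_mu_sum_abs_less)
    also have "\<dots> \<le> 2 * eps ^ card F"
      using upper[OF F] lower[OF F] by simp
    finally show ?thesis .
  qed
  with lam1 lam2 show thesis by (rule that)
qed

lemma box_eq: "box n = {0..<int n} \<times> {0..<int n}"
  unfolding box_def by auto

lemma finite_box [simp]: "finite (box n)"
  by (simp add: box_eq)

lemma card_box: "card (box n) = n * n"
  by (simp add: box_eq card_cartesian_product)

lemma box_edges_subset_lattice_edges: "box_edges n \<subseteq> lattice_edges"
  unfolding box_edges_def by auto

lemma finite_box_edges [simp]: "finite (box_edges n)"
  by (rule finite_subset[of _ "Pow (box n)"]) (auto simp: box_edges_def)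

lemma card_lattice_edge: "e \<in> lattice_edges \<Longrightarrow> card e = 2"
  unfolding lattice_edges_def by (auto simp: card_insert_if)

lemma lattice_edge_finite_nonempty: "e \<in> lattice_edges \<Longrightarrow> finite e \<and> e \<noteq> {}"
  using card_lattice_edge[of e] by (auto intro: card_ge_0_finite)

lemma lattice_edges_at_subset:
  "{e \<in> lattice_edges. u \<in> e} \<subseteq>
     {{u, (fst u + 1, snd u)}, {u, (fst u - 1, snd u)}, {u, (fst u, snd u + 1)}, {u, (fst u, snd u - 1)}}"
proof
  fix e assume "e \<in> {e \<in> lattice_edges. u \<in> e}"
  then obtain p q where pq: "e = {p, q}" "u \<in> e" and d: "\<bar>fst p - fst q\<bar> + \<bar>snd p - snd q\<bar> = 1"
    unfolding lattice_edges_def by auto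
  then have "e = {u, q} \<and> \<bar>fst u - fst q\<bar> + \<bar>snd u - snd q\<bar> = 1 \<or>
      e = {u, p} \<and> \<bar>fst u - fst p\<bar> + \<bar>snd u - snd p\<bar> = 1"
    by (auto simp: abs_minus_commute insert_commute)
  then obtain v where e: "e = {u, v}" and "\<bar>fst u - fst v\<bar> + \<bar>snd u - snd v\<bar> = 1"
    by blast
  then have "v = (fst u + 1, snd u) \<or> v = (fst u - 1, snd u) \<or> v = (fst u, snd u + 1) \<or> v = (fst u, snd u - 1)"
    by (auto simp: prod_eq_iff abs_if split: if_splits)
  then show "e \<in> {{u, (fst u + 1, snd u)}, {u, (fst u - 1, snd u)}, {u, (fst u, snd u + 1)}, {u, (fst u, snd u - 1)}}"
    using e by auto
qed

lemma card_lattice_edges_at_le: "card {e \<in> lattice_edges. u \<in> e} \<le> 4"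
proof -
  have "card {e \<in> lattice_edges. u \<in> e}
      \<le> card {{u, (fst u + 1, snd u)}, {u, (fst u - 1, snd u)}, {u, (fst u, snd u + 1)}, {u, (fst u, snd u - 1)}}"
    by (rule card_mono[OF _ lattice_edges_at_subset]) simp
  also have "\<dots> \<le> 4" by (simp add: card_insert_if)
  finally show ?thesis .
qed

definition touching_edges :: "nat \<Rightarrow> graph \<Rightarrow> edge set" where
  "touching_edges n G = {e \<in> box_edges n. e \<inter> fst G \<noteq> {}}"

lemma card_touching_edges_le:
  assumes "finite (fst G)"
  shows "card (touching_edges n G) \<le> 4 * card (fst G)"
proof -
  have "touching_edges n G \<subseteq> (\<Union>u\<in>fst G. {e \<in> lattice_edges. u \<in> e})"
    unfolding touching_edges_def using box_edges_subset_lattice_edges by auto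
  then have "card (touching_edges n G) \<le> card (\<Union>u\<in>fst G. {e \<in> lattice_edges. u \<in> e})"
    by (rule card_mono[rotated]) (auto intro: finite_subset[OF lattice_edges_at_subset] simp: assms)
  also have "\<dots> \<le> (\<Sum>u\<in>fst G. card {e \<in> lattice_edges. u \<in> e})"
    by (rule card_UN_le[OF assms])
  also have "\<dots> \<le> (\<Sum>u\<in>fst G. 4)"
    by (intro sum_mono card_lattice_edges_at_le)
  finally show ?thesis by simp
qed

lemma edges_subset_touching_edges: "subgraph_of_box n G \<Longrightarrow> snd G \<subseteq> touching_edges n G"
  unfolding touching_edges_def subgraph_of_box_def
  using box_edges_subset_lattice_edges lattice_edge_finite_nonempty by fastforce

lemma finite_edges_of_subgraph:
  "subgraph_of_box n G \<Longrightarrow> finite (snd G) \<and> snd G \<subseteq> lattice_edges"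
  unfolding subgraph_of_box_def
  using box_edges_subset_lattice_edges by (auto intro: finite_subset[OF _ finite_box_edges])

lemma vertices_subset_Union_edges:
  assumes "graph_connected G" "subgraph_of_box n G" "snd G \<noteq> {}"
  shows "fst G \<subseteq> \<Union>(snd G)"
proof
  fix u assume u: "u \<in> fst G"
  obtain e where e: "e \<in> snd G" using assms(3) by auto
  then have "e \<in> lattice_edges" "e \<subseteq> fst G"
    using assms(2) box_edges_subset_lattice_edges unfolding subgraph_of_box_def by auto
  then obtain p where p: "p \<in> e" "p \<in> fst G"
    using lattice_edge_finite_nonempty by blast
  have "(u, p) \<in> {(x, y). {x, y} \<in> snd G}\<^sup>*"
    using assms(1) u p(2) unfolding graph_connected_def by blast
  then show "u \<in> \<Union>(snd G)"
  proof (cases rule: converse_rtranclE)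
    case base
    then show ?thesis using p e by auto
  next
    case (step y)
    then show ?thesis by auto
  qed
qed

lemma card_vertices_le_twice_edges:
  assumes "graph_connected G" "subgraph_of_box n G" "snd G \<noteq> {}"
  shows "card (fst G) \<le> 2 * card (snd G)"
proof -
  have edges: "finite (snd G)" "snd G \<subseteq> lattice_edges"
    using finite_edges_of_subgraph[OF assms(2)] by auto
  have "card (fst G) \<le> card (\<Union>(snd G))"
    using edges lattice_edge_finite_nonempty
    by (intro card_mono[OF _ vertices_subset_Union_edges[OF assms]]) auto
  also have "\<dots> \<le> (\<Sum>e\<in>snd G. card e)"
    by (rule card_Union_le_sum_card)
  also have "\<dots> = (\<Sum>e\<in>snd G. 2)"
    using edges card_lattice_edge by (intro sum.cong) auto
  finally show ?thesis by simp
qed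

lemma finite_subgraphs_of_box: "finite {G. subgraph_of_box n G}"
  by (rule finite_subset[of _ "Pow (box n) \<times> Pow (box_edges n)"])
    (auto simp: subgraph_of_box_def)

definition rooted_connected_subgraphs :: "nat \<Rightarrow> vertex \<Rightarrow> graph set" where
  "rooted_connected_subgraphs n v = {G. subgraph_of_box n G \<and> graph_connected G \<and> v \<in> fst G}"

lemma finite_rooted_connected_subgraphs: "finite (rooted_connected_subgraphs n v)"
  by (rule finite_subset[OF _ finite_subgraphs_of_box]) (auto simp: rooted_connected_subgraphs_def)

text \<open>If \<open>G\<close> is connected and contains \<open>v\<close>, then \<open>G\<close> is the open cluster of \<open>v\<close> in each of these
  configurations, so distinct rooted subgraphs have disjoint families (Peierls' argument).\<close>
definition cluster_configurations :: "nat \<Rightarrow> graph \<Rightarrow> edge set set" where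
  "cluster_configurations n G =
     {X. X \<subseteq> box_edges n \<and> snd G \<subseteq> X \<and> X \<inter> (touching_edges n G - snd G) = {}}"

lemma card_cluster_configurations:
  assumes "subgraph_of_box n G"
  shows "card (cluster_configurations n G) = 2 ^ (card (box_edges n) - card (touching_edges n G))"
proof -
  have edges: "snd G \<subseteq> touching_edges n G" by (rule edges_subset_touching_edges[OF assms])
  have touching: "touching_edges n G \<subseteq> box_edges n" unfolding touching_edges_def by auto
  have "cluster_configurations n G = (\<lambda>Y. snd G \<union> Y) ` Pow (box_edges n - touching_edges n G)"
  proof (intro equalityI subsetI)
    fix X assume X: "X \<in> cluster_configurations n G"
    then have "X = snd G \<union> (X - touching_edges n G)"
      using edges unfolding cluster_configurations_def by auto
    moreover have "X - touching_edges n G \<in> Pow (box_edges n - touching_edges n G)"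
      using X unfolding cluster_configurations_def by auto
    ultimately show "X \<in> (\<lambda>Y. snd G \<union> Y) ` Pow (box_edges n - touching_edges n G)" by blast
  qed (use edges touching in \<open>auto simp: cluster_configurations_def\<close>)
  moreover have "inj_on (\<lambda>Y. snd G \<union> Y) (Pow (box_edges n - touching_edges n G))"
    using edges by (auto simp: inj_on_def)
  ultimately have "card (cluster_configurations n G) = 2 ^ card (box_edges n - touching_edges n G)"
    by (simp add: card_image card_Pow)
  also have "card (box_edges n - touching_edges n G) = card (box_edges n) - card (touching_edges n G)"
    using touching by (intro card_Diff_subset) (auto intro: finite_subset)
  finally show ?thesis .
qed

lemma cluster_configurations_vertices_subset:
  assumes G: "G \<in> rooted_connected_subgraphs n v" and G': "G' \<in> rooted_connected_subgraphs n v"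
    and X: "X \<in> cluster_configurations n G" "X \<in> cluster_configurations n G'"
  shows "fst G \<subseteq> fst G'"
proof
  fix u assume u: "u \<in> fst G"
  have sub: "subgraph_of_box n G" "subgraph_of_box n G'" and v: "v \<in> fst G" "v \<in> fst G'"
    using G G' unfolding rooted_connected_subgraphs_def by auto
  have "(v, u) \<in> {(x, y). {x, y} \<in> snd G}\<^sup>*"
    using G u unfolding rooted_connected_subgraphs_def graph_connected_def by blast
  then show "u \<in> fst G'"
  proof (induction rule: rtrancl_induct)
    case base
    show ?case by (rule v(2))
  next
    case (step x y)
    then have xy: "{x, y} \<in> snd G" by simp
    then have "{x, y} \<in> X" using X(1) unfolding cluster_configurations_def by auto
    moreover have "{x, y} \<in> touching_edges n G'"
      using xy sub(1) step.IH unfolding touching_edges_def subgraph_of_box_def by auto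
    ultimately have "{x, y} \<in> snd G'" using X(2) unfolding cluster_configurations_def by auto
    then show ?case using sub(2) unfolding subgraph_of_box_def by auto
  qed
qed

lemma cluster_configurations_disjoint:
  assumes G: "G \<in> rooted_connected_subgraphs n v" and G': "G' \<in> rooted_connected_subgraphs n v"
    and X: "X \<in> cluster_configurations n G" "X \<in> cluster_configurations n G'"
  shows "G = G'"
proof -
  have vertices: "fst G = fst G'"
    using cluster_configurations_vertices_subset[OF G G' X]
      cluster_configurations_vertices_subset[OF G' G X(2,1)] by auto
  have edges_subset: "snd H \<subseteq> snd H'"
    if "subgraph_of_box n H" "X \<in> cluster_configurations n H" "X \<in> cluster_configurations n H'"
      "fst H = fst H'" for H H'
  proof
    fix e assume e: "e \<in> snd H"
    have "e \<in> X" using e that(2) unfolding cluster_configurations_def by auto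
    moreover have "e \<in> touching_edges n H'"
      using e edges_subset_touching_edges[OF that(1)] that(4) unfolding touching_edges_def by auto
    ultimately show "e \<in> snd H'" using that(3) unfolding cluster_configurations_def by auto
  qed
  have "subgraph_of_box n G" "subgraph_of_box n G'"
    using G G' unfolding rooted_connected_subgraphs_def by auto
  then have "snd G = snd G'"
    using edges_subset[OF _ X vertices] edges_subset[OF _ X(2,1) vertices[symmetric]] by auto
  with vertices show ?thesis by (simp add: prod_eq_iff)
qed

lemma sum_rooted_connected_subgraphs_le_1:
  "(\<Sum>G\<in>rooted_connected_subgraphs n v. (1/2::real) ^ card (touching_edges n G)) \<le> 1"
proof -
  let ?R = "rooted_connected_subgraphs n v" and ?B = "card (box_edges n)"
  have subgraph: "subgraph_of_box n G" if "G \<in> ?R" for G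
    using that unfolding rooted_connected_subgraphs_def by auto
  have touching_le: "card (touching_edges n G) \<le> ?B" for G
    unfolding touching_edges_def by (intro card_mono) auto
  have "(\<Sum>G\<in>?R. card (cluster_configurations n G)) = card (\<Union>G\<in>?R. cluster_configurations n G)"
  proof (rule card_UN_disjoint[symmetric, OF finite_rooted_connected_subgraphs])
    show "\<forall>G\<in>?R. finite (cluster_configurations n G)"
      by (auto simp: cluster_configurations_def intro: finite_subset[of _ "Pow (box_edges n)"])
    show "\<forall>G\<in>?R. \<forall>G'\<in>?R. G \<noteq> G' \<longrightarrow> cluster_configurations n G \<inter> cluster_configurations n G' = {}"
      using cluster_configurations_disjoint by blast
  qed
  also have "\<dots> \<le> card (Pow (box_edges n))"
    by (rule card_mono) (auto simp: cluster_configurations_def)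
  finally have "(\<Sum>G\<in>?R. (2::nat) ^ (?B - card (touching_edges n G))) \<le> 2 ^ ?B"
    by (simp add: card_Pow card_cluster_configurations subgraph)
  then have "real (\<Sum>G\<in>?R. (2::nat) ^ (?B - card (touching_edges n G))) \<le> real (2 ^ ?B)"
    by (simp only: of_nat_le_iff)
  then have "(\<Sum>G\<in>?R. (2::real) ^ (?B - card (touching_edges n G))) \<le> 2 ^ ?B"
    by simp
  moreover have "(\<Sum>G\<in>?R. (2::real) ^ (?B - card (touching_edges n G)))
      = 2 ^ ?B * (\<Sum>G\<in>?R. (1/2::real) ^ card (touching_edges n G))"
    unfolding sum_distrib_left
    by (intro sum.cong refl) (simp add: power_diff touching_le power_one_over)
  ultimately show ?thesis by simp
qed

lemma sum_connected_subgraphs_le: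
  assumes "\<And>G. G \<in> \<G> \<Longrightarrow> subgraph_of_box n G \<and> graph_connected G"
  shows "(\<Sum>G\<in>\<G>. (1/2::real) ^ card (touching_edges n G)) \<le> real n ^ 2"
proof -
  let ?h = "\<lambda>G. (1/2::real) ^ card (touching_edges n G)"
  have vertices: "finite (fst G) \<and> fst G \<noteq> {} \<and> fst G \<subseteq> box n" if "G \<in> \<G>" for G
    using assms[OF that] finite_subset[OF _ finite_box]
    unfolding subgraph_of_box_def graph_connected_def by blast
  have finite_\<G>: "finite \<G>"
    using assms by (intro finite_subset[OF _ finite_subgraphs_of_box]) auto
  have "(\<Sum>G\<in>\<G>. ?h G) \<le> (\<Sum>G\<in>\<G>. \<Sum>v\<in>fst G. ?h G)"
  proof (intro sum_mono)
    fix G assume "G \<in> \<G>"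
    then have "1 \<le> card (fst G)" using vertices by (simp add: Suc_le_eq card_gt_0_iff)
    then show "?h G \<le> (\<Sum>v\<in>fst G. ?h G)" by simp
  qed
  also have "\<dots> = (\<Sum>G\<in>\<G>. \<Sum>v\<in>{v. v \<in> box n \<and> v \<in> fst G}. ?h G)"
    using vertices by (intro sum.cong refl) blast
  also have "\<dots> = (\<Sum>v\<in>box n. \<Sum>G\<in>{G. G \<in> \<G> \<and> v \<in> fst G}. ?h G)"
    by (rule sum.swap_restrict) (simp_all add: finite_\<G>)
  also have "\<dots> \<le> (\<Sum>v\<in>box n. \<Sum>G\<in>rooted_connected_subgraphs n v. ?h G)"
    using assms
    by (intro sum_mono sum_mono2 finite_rooted_connected_subgraphs) (auto simp: rooted_connected_subgraphs_def)
  also have "\<dots> \<le> (\<Sum>v\<in>box n. 1)"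
    by (intro sum_mono sum_rooted_connected_subgraphs_le_1)
  finally show ?thesis by (simp add: card_box power2_eq_square)
qed

text \<open>The constant \<open>exp (-14) / 2^10\<close> splits its \<open>m\<close>-th power into \<open>2^(-8m)\<close>, paying for the at most
  \<open>8m\<close> touching edges, \<open>exp (-14 m) \<le> n^(-7)\<close>, as \<open>ln n \<le> card (fst G) \<le> 2m\<close>, and \<open>4^(-m) \<le> 1/4\<close>.\<close>
lemma connected_subgraph_weight_bound:
  assumes G: "G \<in> CG n (ln (real n))" "snd G \<noteq> {}" and n: "1 \<le> n"
  shows "2 * (exp (-14) / 2^10) ^ card (snd G)
    \<le> (1/2::real) ^ card (touching_edges n G) * (real n powr (-7) / 2)"
proof -
  let ?m = "card (snd G)" and ?k = "card (fst G)"
  have sub: "subgraph_of_box n G" and conn: "graph_connected G" and ln_le: "ln (real n) \<le> ?k"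
    using G(1) unfolding CG_def by auto
  have "1 \<le> ?m"
    using finite_edges_of_subgraph[OF sub] G(2) by (simp add: Suc_le_eq card_gt_0_iff)
  have "finite (fst G)"
    using sub finite_subset[OF _ finite_box] unfolding subgraph_of_box_def by blast
  then have "card (touching_edges n G) \<le> 8 * ?m"
    using card_touching_edges_le[of G n] card_vertices_le_twice_edges[OF conn sub G(2)] by linarith
  then have touching: "(1/2::real) ^ (8 * ?m) \<le> (1/2) ^ card (touching_edges n G)"
    by (intro power_decreasing) auto
  have "exp (-14::real) ^ ?m = exp (real ?m * (-14))"
    by (subst exp_of_nat_mult[symmetric]) simp
  also have "\<dots> \<le> exp (-7 * ln (real n))"
    using ln_le card_vertices_le_twice_edges[OF conn sub G(2)] by simp
  also have "\<dots> = real n powr (-7)"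
    using n by (simp add: powr_def)
  finally have vertices: "exp (-14::real) ^ ?m \<le> real n powr (-7)" .
  have "((1/2::real)^2) ^ ?m \<le> ((1/2)^2) ^ 1"
    using \<open>1 \<le> ?m\<close> by (intro power_decreasing) (auto simp: power2_eq_square)
  then have rest: "2 * ((1/2::real)^2) ^ ?m \<le> 1/2"
    by (simp add: power2_eq_square)
  have "(2::real) ^ (?m * 8) = 256 ^ ?m"
    by (simp add: power_mult mult.commute[of ?m])
  then have "(1024::real) ^ ?m = 4 ^ ?m * 2 ^ (?m * 8)"
    by (simp flip: power_mult_distrib)
  then have "2 * (exp (-14) / 2^10) ^ ?m = (1/2::real) ^ (8 * ?m) * exp (-14) ^ ?m * (2 * ((1/2)^2) ^ ?m)"
    by (simp add: power_mult_distrib power_divide power_mult[symmetric] field_simps flip: power_add)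
  also have "\<dots> \<le> (1/2) ^ card (touching_edges n G) * real n powr (-7) * (1/2)"
    by (intro mult_mono touching vertices rest) auto
  finally show ?thesis by simp
qed

lemma deviation_events_cover:
  "{w \<in> space mu. \<exists>G\<in>\<G>. absw w G > lam1 * real (card (snd G)) \<or> absw w G < lam2 * real (card (snd G))}
     = (\<Union>G\<in>{G \<in> \<G>. snd G \<noteq> {}}. deviation_event lam1 lam2 (snd G))"
  unfolding deviation_event_def absw_def by force

lemma measure_deviation_events_le:
  fixes n :: nat
  defines "\<B> \<equiv> {G \<in> CG n (ln (real n)). snd G \<noteq> {}}"
  assumes deviation: "\<And>F. finite F \<Longrightarrow> F \<subseteq> lattice_edges \<Longrightarrow>
      measure mu (deviation_event lam1 lam2 F) \<le> 2 * (exp (-14) / 2^10) ^ card F"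
    and n: "1 \<le> n"
  shows "(\<Union>G\<in>\<B>. deviation_event lam1 lam2 (snd G)) \<in> sets mu"
    and "measure mu (\<Union>G\<in>\<B>. deviation_event lam1 lam2 (snd G)) < real n powr (-4)"
proof -
  have subgraph: "subgraph_of_box n G \<and> graph_connected G" if "G \<in> \<B>" for G
    using that unfolding \<B>_def CG_def by auto
  have "finite \<B>"
    using subgraph by (intro finite_subset[OF _ finite_subgraphs_of_box]) auto
  have edges: "finite (snd G) \<and> snd G \<subseteq> lattice_edges" if "G \<in> \<B>" for G
    using finite_edges_of_subgraph[of n G] subgraph[OF that] by simp
  then have events: "deviation_event lam1 lam2 (snd G) \<in> sets mu" if "G \<in> \<B>" for G
    using that by (intro sets_deviation_event) auto
  then show "(\<Union>G\<in>\<B>. deviation_event lam1 lam2 (snd G)) \<in> sets mu"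
    using \<open>finite \<B>\<close> by blast
  have "measure mu (\<Union>G\<in>\<B>. deviation_event lam1 lam2 (snd G))
      \<le> (\<Sum>G\<in>\<B>. measure mu (deviation_event lam1 lam2 (snd G)))"
    using \<open>finite \<B>\<close> events by (rule measure_UNION_le)
  also have "\<dots> \<le> (\<Sum>G\<in>\<B>. (1/2::real) ^ card (touching_edges n G) * (real n powr (-7) / 2))"
  proof (rule sum_mono)
    fix G assume G: "G \<in> \<B>"
    then have G_CG: "G \<in> CG n (ln (real n))" "snd G \<noteq> {}"
      unfolding \<B>_def by simp_all
    have "measure mu (deviation_event lam1 lam2 (snd G)) \<le> 2 * (exp (-14) / 2^10) ^ card (snd G)"
      by (rule deviation) (use edges[OF G] in auto)
    also have "\<dots> \<le> (1/2::real) ^ card (touching_edges n G) * (real n powr (-7) / 2)"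
      by (rule connected_subgraph_weight_bound[OF G_CG n])
    finally show "measure mu (deviation_event lam1 lam2 (snd G))
        \<le> (1/2::real) ^ card (touching_edges n G) * (real n powr (-7) / 2)" .
  qed
  also have "\<dots> \<le> real n ^ 2 * (real n powr (-7) / 2)"
    unfolding sum_distrib_right[symmetric]
    by (rule mult_right_mono[OF sum_connected_subgraphs_le[OF subgraph]]) simp_all
  also have "\<dots> = real n powr 2 * real n powr (-7) / 2"
    using n by (subst powr_numeral) auto
  also have "\<dots> = real n powr (-5) / 2"
    by (subst powr_add[symmetric]) simp
  also have "\<dots> < real n powr (-4)"
  proof -
    have "real n powr (-5) \<le> real n powr (-4)" "0 < real n powr (-5)"
      using n by (simp_all add: powr_mono)
    then show ?thesis by linarith
  qed
  finally show "measure mu (\<Union>G\<in>\<B>. deviation_event lam1 lam2 (snd G)) < real n powr (-4)" .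
qed

theorem corollary2p4:
  shows "\<exists>lam1 lam2 :: real. lam1 > 0 \<and> lam2 > 0 \<and>
    (\<forall>n::nat. n \<ge> 1 \<longrightarrow>
      (let S = {w \<in> space mu. \<exists>G\<in>CG n (ln (real n)).
                  absw w G > lam1 * real (card (snd G)) \<or> absw w G < lam2 * real (card (snd G))}
       in S \<in> sets mu \<and> measure mu S < real n powr (-4)))"
proof -
  have "exp (-14::real) < 1024"
    using exp_less_one_iff[of "-14::real"] by linarith
  then have "(0::real) < exp (-14) / 2^10" "exp (-14) / 2^10 < (1::real)"
    by simp_all
  then obtain lam1 lam2 :: real where lam: "0 < lam1" "0 < lam2" and deviation:
    "\<And>F. finite F \<Longrightarrow> F \<subseteq> lattice_edges \<Longrightarrow>
       measure mu (deviation_event lam1 lam2 F) \<le> 2 * (exp (-14) / 2^10) ^ card F"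
    using measure_deviation_event_le by blast
  show ?thesis
    unfolding Let_def deviation_events_cover
    by (intro exI[of _ lam1] exI[of _ lam2] conjI allI impI lam measure_deviation_events_le[OF deviation])
qed

end
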